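(* Let $(\Omega,\mathcal A)$ be a Borel space, $(\Omega,X_\bullet)$ a Borel field of complete metric spaces, and $F_\bullet$ a subfield with $F_\omega$ closed in $X_\omega$ for every $\omega$. The following are equivalent: (i) $F_\bullet$ is a Borel subfield; (ii) $\omega\mapsto d_\omega(x_\omega,F_\omega)\in[0,\infty]$ is Borel for every $x_\bullet\in\mathcal L(\Omega,X_\bullet)$; (iii) $\omega\mapsto d_\omega(x_\omega,F_\omega)$ is Borel for every $x_\bullet$ in some fundamental family $\mathcal D$ of $\mathcal L(\Omega,X_\bullet)$. (Convention: $d(x,\emptyset)=\infty$.)
   Context: Borel field of metric spaces: $(X_\omega,d_\omega)_{\omega\in\Omega}$ metric spaces; a section is $x_\bullet=(x_\omega)$, $x_\omega\in X_\omega$. A Borel structure is a set $\mathcal L(\Omega,X_\bullet)$ of sections such that (a) $\omega\mapsto d_\omega(x_\omega,y_\omega)$ is Borel for all $x_\bullet,y_\bullet\in\mathcal L$; (b) any section $y_\bullet$ with $\omega\mapsto d_\omega(x_\omega,y_\omega)$ Borel for all $x_\bullet\in\mathcal L$ lies in $\mathcal L$; (c) there is a countable $\mathcal D=\{x^n_\bullet\}\subseteq\mathcal L$ (fundamental family) with $\{x^n_\omega\}_n$ dense in $X_\omega$ for all $\omega$. For Borel $\Omega'$, $\mathcal L(\Omega',X_\bullet)$ = restrictions to $\Omega'$ of Borel sections. A subfield is $A_\bullet=(A_\omega)$ with $A_\omega\subseteq X_\omega$ (possibly empty); it is Borel if $\Omega'=\{\omega:A_\omega\ne\emptyset\}\in\mathcal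 A$ and there are countably many $y^n_\bullet\in\mathcal L(\Omega',X_\bullet)$ with $y^n_\omega\in A_\omega$ and $A_\omega\subseteq\overline{\{y^n_\omega\}_n}$ for all $\omega\in\Omega'$. *)

theory Defs
  imports "HOL-Analysis.Analysis"
begin

text \<open>Ambient carrier type 'x; fibre X w is a set with metric d w.
  Omega = space M, A = sets M.\<close>

definition is_section :: "'w measure \<Rightarrow> ('w \<Rightarrow> 'x set) \<Rightarrow> ('w \<Rightarrow> 'x) \<Rightarrow> bool" where
  "is_section M X x \<longleftrightarrow> (\<forall>w\<in>space M. x w \<in> X w)"

definition dense_in :: "('x \<Rightarrow> 'x \<Rightarrow> real) \<Rightarrow> 'x set \<Rightarrow> 'x set \<Rightarrow> bool" where
  "dense_in d A S \<longleftrightarrow> (\<forall>p\<in>S. \<forall>e>0. \<exists>q\<in>A. d q p < e)"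

definition fundamental_family ::
  "'w measure \<Rightarrow> ('w \<Rightarrow> 'x set) \<Rightarrow> ('w \<Rightarrow> 'x \<Rightarrow> 'x \<Rightarrow> real) \<Rightarrow> ('w \<Rightarrow> 'x) set \<Rightarrow> ('w \<Rightarrow> 'x) set \<Rightarrow> bool" where
  "fundamental_family M X d L D \<longleftrightarrow> countable D \<and> D \<subseteq> L \<and>
     (\<forall>w\<in>space M. dense_in (d w) ((\<lambda>x. x w) ` D) (X w))"

definition borel_structure ::
  "'w measure \<Rightarrow> ('w \<Rightarrow> 'x set) \<Rightarrow> ('w \<Rightarrow> 'x \<Rightarrow> 'x \<Rightarrow> real) \<Rightarrow> ('w \<Rightarrow> 'x) set \<Rightarrow> bool" where
  "borel_structure M X d L \<longleftrightarrow>
     (\<forall>x\<in>L. is_section M X x) \<and>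
     (\<forall>x\<in>L. \<forall>y\<in>L. (\<lambda>w. d w (x w) (y w)) \<in> borel_measurable M) \<and>
     (\<forall>y. is_section M X y \<and> (\<forall>x\<in>L. (\<lambda>w. d w (x w) (y w)) \<in> borel_measurable M) \<longrightarrow> y \<in> L) \<and>
     (\<exists>D. fundamental_family M X d L D)"

definition borel_field ::
  "'w measure \<Rightarrow> ('w \<Rightarrow> 'x set) \<Rightarrow> ('w \<Rightarrow> 'x \<Rightarrow> 'x \<Rightarrow> real) \<Rightarrow> ('w \<Rightarrow> 'x) set \<Rightarrow> bool" where
  "borel_field M X d L \<longleftrightarrow> (\<forall>w\<in>space M. Metric_space (X w) (d w)) \<and> borel_structure M X d L"

definition borel_sections_on ::
  "'w set \<Rightarrow> ('w \<Rightarrow> 'x) set \<Rightarrow> ('w \<Rightarrow> 'x) set" where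
  "borel_sections_on \<Omega>' L = {y. \<exists>z\<in>L. \<forall>w\<in>\<Omega>'. y w = z w}"

definition borel_subfield ::
  "'w measure \<Rightarrow> ('w \<Rightarrow> 'x set) \<Rightarrow> ('w \<Rightarrow> 'x \<Rightarrow> 'x \<Rightarrow> real) \<Rightarrow> ('w \<Rightarrow> 'x) set \<Rightarrow> ('w \<Rightarrow> 'x set) \<Rightarrow> bool" where
  "borel_subfield M X d L A \<longleftrightarrow>
     (let \<Omega>' = {w\<in>space M. A w \<noteq> {}} in
       \<Omega>' \<in> sets M \<and>
       (\<exists>Y. countable Y \<and> Y \<subseteq> borel_sections_on \<Omega>' L \<and>
            (\<forall>y\<in>Y. \<forall>w\<in>\<Omega>'. y w \<in> A w) \<and>
            (\<forall>w\<in>\<Omega>'. dense_in (d w) ((\<lambda>y. y w) ` Y) (A w))))"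

text \<open>Distance from a point to a set in [0,\<infinity>]; the infimum over the empty set is \<infinity>.\<close>
definition setdist_e :: "('x \<Rightarrow> 'x \<Rightarrow> real) \<Rightarrow> 'x \<Rightarrow> 'x set \<Rightarrow> ennreal" where
  "setdist_e d p S = (INF q\<in>S. ennreal (d p q))"

end

theory Submission
  imports Defs
begin

text \<open>The real-valued distance to a set; it agrees with setdist_e whenever the set
  is nonempty (and is 0 for the empty set, where setdist_e is infinite).\<close>

definition setdist_real :: "('x \<Rightarrow> 'x \<Rightarrow> real) \<Rightarrow> 'x \<Rightarrow> 'x set \<Rightarrow> real" where
  "setdist_real d p S = enn2real (setdist_e d p S)"

lemma setdist_e_le: "q \<in> S \<Longrightarrow> setdist_e d p S \<le> ennreal (d p q)"
  unfolding setdist_e_def by (rule INF_lower)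

lemma setdist_e_empty [simp]: "setdist_e d p {} = top"
  unfolding setdist_e_def by simp

lemma setdist_e_real:
  assumes "S \<noteq> {}"
  shows "setdist_e d p S = ennreal (setdist_real d p S)"
proof -
  obtain q where "q \<in> S" using assms by auto
  then have "setdist_e d p S < top"
    using setdist_e_le[of q S d p] by (simp add: le_less_trans)
  then show ?thesis unfolding setdist_real_def by simp
qed

text \<open>Finiteness of the distance detects nonemptiness; this makes the support of a
  subfield measurable as soon as the distance functions are.\<close>

lemma setdist_e_finite_iff: "setdist_e d p S < top \<longleftrightarrow> S \<noteq> {}"
  using setdist_e_real[of S d p] by (cases "S = {}") auto

lemma setdist_real_nonneg: "0 \<le> setdist_real d p S"
  unfolding setdist_real_def by simp

context Metric_space
begin

lemma setdist_real_le:
  assumes "q \<in> S"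
  shows "setdist_real d p S \<le> d p q"
proof -
  have "setdist_e d p S = ennreal (setdist_real d p S)"
    using assms by (intro setdist_e_real) auto
  then show ?thesis
    using setdist_e_le[OF assms, of d p] by simp
qed

lemma setdist_real_approx:
  assumes "S \<noteq> {}" "e > 0"
  shows "\<exists>q\<in>S. d p q < setdist_real d p S + e"
proof -
  have "setdist_e d p S < ennreal (setdist_real d p S + e)"
    using setdist_e_real[OF assms(1), of d p] assms(2) setdist_real_nonneg[of d p S]
    by (simp add: ennreal_lessI)
  then obtain q where "q \<in> S" "ennreal (d p q) < ennreal (setdist_real d p S + e)"
    unfolding setdist_e_def by (auto simp: INF_less_iff)
  then show ?thesis
    by (metis ennreal_less_iff nonneg)
qed

lemma setdist_real_triangle:
  assumes "S \<noteq> {}" "S \<subseteq> M" "p \<in> M" "v \<in> M"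
  shows "setdist_real d p S \<le> d p v + setdist_real d v S"
proof (rule field_le_epsilon)
  fix e :: real assume "e > 0"
  then obtain q where q: "q \<in> S" "d v q < setdist_real d v S + e"
    using setdist_real_approx assms by blast
  have "setdist_real d p S \<le> d p q" by (rule setdist_real_le[OF q(1)])
  also have "\<dots> \<le> d p v + d v q" using triangle assms q by auto
  finally show "setdist_real d p S \<le> d p v + setdist_real d v S + e" using q by simp
qed

lemma setdist_e_triangle:
  assumes "S \<subseteq> M" "p \<in> M" "v \<in> M"
  shows "setdist_e d p S \<le> ennreal (d p v) + setdist_e d v S"
proof (cases "S = {}")
  case False
  then show ?thesis
    using setdist_real_triangle[OF False assms] setdist_e_real[OF False]
    by (simp add: ennreal_plus[symmetric] setdist_real_nonneg ennreal_leI del: ennreal_plus)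
qed simp

lemma closedin_setdist_zero:
  assumes "closedin mtopology S" "p \<in> M" "S \<noteq> {}" "setdist_real d p S \<le> 0"
  shows "p \<in> S"
proof (rule ccontr)
  assume "p \<notin> S"
  then obtain r where r: "r > 0" "disjnt S (mball p r)"
    using assms(1,2) unfolding closedin_metric by blast
  obtain q where q: "q \<in> S" "d p q < r"
    using setdist_real_approx[OF assms(3) r(1), of p] assms(4) by auto
  have "q \<in> M" using q(1) assms(1) closedin_subset by fastforce
  then show False using r q assms(2) by (auto simp: disjnt_def)
qed

text \<open>A point of S that almost realises the distance from v to S is close to every
  point of S near v; this is why approximations of a dense family are dense in S.\<close>

lemma almost_nearest_point_close:
  assumes "p \<in> S" "y \<in> S" "S \<subseteq> M" "v \<in> M" "d v y \<le> setdist_real d v S + \<delta>"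
  shows "d y p \<le> 2 * d v p + \<delta>"
proof -
  have "d y p \<le> d y v + d v p" using triangle assms by blast
  moreover have "setdist_real d v S \<le> d v p" using setdist_real_le[OF assms(1)] .
  ultimately show ?thesis using assms(5) commute[of y v] by linarith
qed

text \<open>A dense set T contains a point within delta of S that is not much farther from p
  than S is; this is the greedy step of the approximation scheme in (ii) => (i).\<close>

lemma dense_point_near_set:
  assumes "S \<noteq> {}" "S \<subseteq> M" "p \<in> M" "T \<subseteq> M" "dense_in d T M" "\<delta> > 0"
  shows "\<exists>t\<in>T. d t p < setdist_real d p S + 2 * \<delta> \<and> setdist_real d t S < \<delta>"
proof -
  obtain q where q: "q \<in> S" "d p q < setdist_real d p S + \<delta>"
    using setdist_real_approx[OF assms(1,6)] by blast
  have qM: "q \<in> M" using q(1) assms(2) by blast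
  obtain t where t: "t \<in> T" "d t q < \<delta>"
    using assms(5,6) qM unfolding dense_in_def by blast
  have "d t p \<le> d t q + d q p" using triangle t(1) assms(3,4) qM by blast
  moreover have "setdist_real d t S \<le> d t q" using setdist_real_le[OF q(1)] .
  ultimately have "d t p < setdist_real d p S + 2 * \<delta>" "setdist_real d t S < \<delta>"
    using q t commute[of q p] by linarith+
  then show ?thesis using t(1) by blast
qed

text \<open>The infimum defining the distance to S may be taken over any dense subset of S.
  This gives (i) => (ii): a Borel subfield carries a countable dense family of sections.\<close>

lemma setdist_e_dense_subset:
  assumes "S \<subseteq> M" "p \<in> M" "T \<subseteq> S" "dense_in d T S"
  shows "setdist_e d p S = (INF q\<in>T. ennreal (d p q))"
proof (rule antisym)
  show "setdist_e d p S \<le> (INF q\<in>T. ennreal (d p q))"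
    unfolding setdist_e_def using assms(3) by (rule INF_superset_mono) auto
  show "(INF q\<in>T. ennreal (d p q)) \<le> setdist_e d p S"
    unfolding setdist_e_def
  proof (rule INF_greatest)
    fix q assume q: "q \<in> S"
    show "(INF q\<in>T. ennreal (d p q)) \<le> ennreal (d p q)"
    proof (rule ennreal_le_epsilon)
      fix e :: real assume "e > 0"
      then obtain t where t: "t \<in> T" "d t q < e"
        using assms(4) q unfolding dense_in_def by blast
      have "t \<in> M" "q \<in> M" using assms(1,3) q t by auto
      then have "d p t \<le> d p q + d q t" using triangle assms(2) by blast
      also have "\<dots> \<le> d p q + e" using t commute by (simp add: less_imp_le)
      finally have "ennreal (d p t) \<le> ennreal (d p q) + ennreal e"
        using \<open>e > 0\<close> by (simp add: ennreal_plus[symmetric] ennreal_leI del: ennreal_plus)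
      moreover have "(INF q\<in>T. ennreal (d p q)) \<le> ennreal (d p t)" by (rule INF_lower[OF t(1)])
      ultimately show "(INF q\<in>T. ennreal (d p q)) \<le> ennreal (d p q) + ennreal e" by order
    qed
  qed
qed

text \<open>Distance to S computed through a dense subset T of the whole space:
  d(p,S) = inf over v in T of d(p,v) + d(v,S).  This gives (iii) => (ii).\<close>

lemma setdist_e_via_dense:
  assumes "S \<subseteq> M" "p \<in> M" "T \<subseteq> M" "dense_in d T M"
  shows "setdist_e d p S = (INF v\<in>T. ennreal (d p v) + setdist_e d v S)"
proof (rule antisym)
  show "setdist_e d p S \<le> (INF v\<in>T. ennreal (d p v) + setdist_e d v S)"
    by (rule INF_greatest) (use assms setdist_e_triangle in blast)
  show "(INF v\<in>T. ennreal (d p v) + setdist_e d v S) \<le> setdist_e d p S"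
    unfolding setdist_e_def[of d p S]
  proof (rule INF_greatest)
    fix q assume q: "q \<in> S"
    show "(INF v\<in>T. ennreal (d p v) + setdist_e d v S) \<le> ennreal (d p q)"
    proof (rule ennreal_le_epsilon)
      fix e :: real assume "e > 0"
      then obtain t where t: "t \<in> T" "d t p < e / 2"
        using assms(2,4) unfolding dense_in_def by (meson half_gt_zero)
      have "t \<in> M" "q \<in> M" using assms(1,3) q t by auto
      then have "d t q \<le> d t p + d p q" using triangle assms(2) by blast
      have "ennreal (d p t) + setdist_e d t S \<le> ennreal (d p t) + ennreal (d t q)"
        using setdist_e_le[OF q] by (rule add_left_mono)
      also have "\<dots> = ennreal (d p t + d t q)" by simp
      also have "\<dots> \<le> ennreal (d p q + e)"
        using \<open>d t q \<le> d t p + d p q\<close> t commute[of p t] by (intro ennreal_leI) simp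
      also have "\<dots> = ennreal (d p q) + ennreal e" using \<open>e > 0\<close> by simp
      finally have "ennreal (d p t) + setdist_e d t S \<le> ennreal (d p q) + ennreal e" .
      moreover have "(INF v\<in>T. ennreal (d p v) + setdist_e d v S) \<le> ennreal (d p t) + setdist_e d t S"
        by (rule INF_lower[OF t(1)])
      ultimately show "(INF v\<in>T. ennreal (d p v) + setdist_e d v S) \<le> ennreal (d p q) + ennreal e"
        by order
    qed
  qed
qed

lemma limitin_mdist:
  assumes "limitin mtopology \<sigma> l sequentially" "a \<in> M"
  shows "(\<lambda>k. d a (\<sigma> k)) \<longlonglongrightarrow> d a l"
  unfolding tendsto_iff
proof (intro allI impI)
  fix e :: real assume "e > 0"
  have lM: "l \<in> M" using assms(1) limitin_mspace by blast
  have "eventually (\<lambda>k. \<sigma> k \<in> M \<and> d (\<sigma> k) l < e) sequentially"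
    using assms(1) \<open>e > 0\<close> unfolding limitin_metric by blast
  then show "eventually (\<lambda>k. dist (d a (\<sigma> k)) (d a l) < e) sequentially"
  proof (rule eventually_mono)
    fix k assume k: "\<sigma> k \<in> M \<and> d (\<sigma> k) l < e"
    have "d a (\<sigma> k) \<le> d a l + d l (\<sigma> k)" "d a l \<le> d a (\<sigma> k) + d (\<sigma> k) l"
      using triangle k lM assms(2) by auto
    then show "dist (d a (\<sigma> k)) (d a l) < e" using k commute[of l "\<sigma> k"]
      by (simp add: dist_real_def abs_less_iff)
  qed
qed

lemma geometric_steps_dist:
  assumes inM: "\<And>k. u k \<in> M" and step: "\<And>k. d (u (Suc k)) (u k) \<le> c / 2 ^ k"
    and km: "k \<le> m"
  shows "d (u k) (u m) \<le> 2 * c / 2 ^ k"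
proof -
  have telescope: "d (u k) (u (k + j)) \<le> 2 * c / 2 ^ k - 2 * c / 2 ^ (k + j)" for j
  proof (induction j)
    case (Suc j)
    have "d (u k) (u (k + Suc j)) \<le> d (u k) (u (k + j)) + d (u (k + j)) (u (k + Suc j))"
      using triangle inM by simp
    also have "\<dots> \<le> 2 * c / 2 ^ k - 2 * c / 2 ^ (k + j) + c / 2 ^ (k + j)"
      using Suc step[of "k + j"] commute[of "u (k + j)"] by simp
    also have "\<dots> = 2 * c / 2 ^ k - 2 * c / 2 ^ (k + Suc j)"
      by (simp add: field_simps)
    finally show ?case .
  qed (use inM in simp)
  have "0 \<le> c" using order_trans[OF nonneg step[of 0]] by simp
  then have "0 \<le> 2 * c / 2 ^ m" by simp
  moreover obtain j where "m = k + j" using le_Suc_ex[OF km] by blast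
  ultimately show ?thesis using telescope[of j] by simp
qed

lemma geometric_steps_MCauchy:
  assumes inM: "\<And>k. u k \<in> M" and step: "\<And>k. d (u (Suc k)) (u k) \<le> c / 2 ^ k"
  shows "MCauchy u"
  unfolding MCauchy_def
proof (intro conjI allI impI)
  show "range u \<subseteq> M" using inM by auto
  fix e :: real assume "e > 0"
  have "(\<lambda>N. 2 * c / 2 ^ N) \<longlonglongrightarrow> 0" by (rule LIMSEQ_divide_realpow_zero) simp
  then have "eventually (\<lambda>n. 2 * c / 2 ^ n < e) sequentially"
    using \<open>e > 0\<close> by (rule order_tendstoD(2))
  then obtain N where N: "\<And>n. N \<le> n \<Longrightarrow> 2 * c / 2 ^ n < e"
    unfolding eventually_sequentially by blast
  have "d (u n) (u n') < e" if "N \<le> n" "n \<le> n'" for n n'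
    using geometric_steps_dist[OF inM step \<open>n \<le> n'\<close>] N[OF \<open>N \<le> n\<close>] by simp
  then show "\<exists>N. \<forall>n n'. N \<le> n \<longrightarrow> N \<le> n' \<longrightarrow> d (u n) (u n') < e"
    by (metis commute nle_le)
qed

lemma approximating_sequence_limit:
  assumes complete: "mcomplete" and cl: "closedin mtopology S" and ne: "S \<noteq> {}"
    and inM: "\<And>k. z k \<in> M"
    and close: "\<And>k. setdist_real d (z (Suc k)) S < c / 2 ^ Suc k"
    and step: "\<And>k. d (z (Suc k)) (z k) < setdist_real d (z k) S + c / 2 ^ k"
  shows "\<exists>l\<in>S. limitin mtopology z l sequentially \<and> d (z 0) l \<le> setdist_real d (z 0) S + 3 * c"
proof -
  have SM: "S \<subseteq> M" using cl closedin_subset by fastforce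
  define u where "u k = z (Suc k)" for k
  have uM: "u k \<in> M" for k using inM u_def by simp
  have u_step: "d (u (Suc k)) (u k) \<le> c / 2 ^ k" for k
    using step[of "Suc k"] close[of k] unfolding u_def by simp
  obtain l where lu: "limitin mtopology u l sequentially"
    using complete geometric_steps_MCauchy[OF uM u_step] unfolding mcomplete_def by blast
  have lM: "l \<in> M" using limitin_mspace[OF lu] .
  have lz: "limitin mtopology z l sequentially"
  proof (rule limitin_sequentially_offset_rev)
    show "limitin mtopology (\<lambda>i. z (i + 1)) l sequentially" using lu by (simp add: u_def[abs_def])
  qed
  have "(\<lambda>k. d (u k) l) \<longlonglongrightarrow> 0"
    using lu unfolding limitin_metric_dist_null by blast
  moreover have "(\<lambda>k. c / 2 ^ Suc k) \<longlonglongrightarrow> 0"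
    using LIMSEQ_Suc[OF LIMSEQ_divide_realpow_zero[of 2 c]] by simp
  ultimately have lim: "(\<lambda>k. d (u k) l + c / 2 ^ Suc k) \<longlonglongrightarrow> 0"
    using tendsto_add by fastforce
  have bound: "setdist_real d l S \<le> d (u k) l + c / 2 ^ Suc k" for k
  proof -
    have "setdist_real d l S \<le> d l (u k) + setdist_real d (u k) S"
      using setdist_real_triangle[OF ne SM lM uM] .
    then show ?thesis using close[of k] commute[of l "u k"] unfolding u_def by simp
  qed
  have "setdist_real d l S \<le> 0"
    using LIMSEQ_le_const[OF lim] bound by blast
  then have lS: "l \<in> S" using closedin_setdist_zero[OF cl lM ne] by simp
  have "d (z 0) (u k) \<le> setdist_real d (z 0) S + 3 * c" for k
  proof -
    have "d (z 0) (u k) \<le> d (z 0) (u 0) + d (u 0) (u k)" using triangle inM uM by blast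
    moreover have "d (z 0) (u 0) < setdist_real d (z 0) S + c"
      using step[of 0] commute unfolding u_def by simp
    moreover have "d (u 0) (u k) \<le> 2 * c" using geometric_steps_dist[OF uM u_step, of 0 k] by simp
    ultimately show ?thesis by linarith
  qed
  then have "d (z 0) l \<le> setdist_real d (z 0) S + 3 * c"
    using LIMSEQ_le_const2[OF limitin_mdist[OF lu inM[of 0]]] by blast
  then show ?thesis using lS lz by blast
qed

end

locale borel_metric_field =
  fixes M :: "'w measure" and X :: "'w \<Rightarrow> 'x set" and d :: "'w \<Rightarrow> 'x \<Rightarrow> 'x \<Rightarrow> real"
    and L :: "('w \<Rightarrow> 'x) set"
  assumes field: "borel_field M X d L"
begin

lemma fibre_metric: "w \<in> space M \<Longrightarrow> Metric_space (X w) (d w)"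
  using field unfolding borel_field_def by blast

lemma section_fibre: "x \<in> L \<Longrightarrow> w \<in> space M \<Longrightarrow> x w \<in> X w"
  using field unfolding borel_field_def borel_structure_def is_section_def by blast

lemma section_dist_measurable: "x \<in> L \<Longrightarrow> y \<in> L \<Longrightarrow> (\<lambda>w. d w (x w) (y w)) \<in> borel_measurable M"
  using field unfolding borel_field_def borel_structure_def by blast

lemma sectionI:
  assumes "\<And>w. w \<in> space M \<Longrightarrow> y w \<in> X w"
    and "\<And>x. x \<in> L \<Longrightarrow> (\<lambda>w. d w (x w) (y w)) \<in> borel_measurable M"
  shows "y \<in> L"
  using field assms unfolding borel_field_def borel_structure_def is_section_def by blast

lemma fundamental_family_exists: "\<exists>D. fundamental_family M X d L D"
  using field unfolding borel_field_def borel_structure_def by blast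

lemma section_select:
  fixes f :: "nat \<Rightarrow> 'w \<Rightarrow> 'x" and N :: "'w \<Rightarrow> nat"
  assumes fL: "\<And>n. f n \<in> L" and N: "N \<in> measurable M (count_space UNIV)"
  shows "(\<lambda>w. f (N w) w) \<in> L"
proof (rule sectionI)
  show "f (N w) w \<in> X w" if "w \<in> space M" for w
    using section_fibre[OF fL that] .
  show "(\<lambda>w. d w (x w) (f (N w) w)) \<in> borel_measurable M" if x: "x \<in> L" for x
    by (rule measurable_compose_countable[where f="\<lambda>n w. d w (x w) (f n w)", OF _ N])
       (use section_dist_measurable[OF x fL] in blast)
qed

lemma section_limit:
  assumes zL: "\<And>k. z k \<in> L"
    and lim: "\<And>w. w \<in> space M \<Longrightarrow>
                limitin (Metric_space.mtopology (X w) (d w)) (\<lambda>k. z k w) (l w) sequentially"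
  shows "l \<in> L"
proof (rule sectionI)
  fix w assume w: "w \<in> space M"
  interpret Metric_space "X w" "d w" using fibre_metric[OF w] .
  show "l w \<in> X w" using limitin_mspace[OF lim[OF w]] .
next
  fix x assume x: "x \<in> L"
  show "(\<lambda>w. d w (x w) (l w)) \<in> borel_measurable M"
  proof (rule borel_measurable_LIMSEQ_real[where u="\<lambda>k w. d w (x w) (z k w)"])
    fix w assume w: "w \<in> space M"
    interpret Metric_space "X w" "d w" using fibre_metric[OF w] .
    show "(\<lambda>k. d w (x w) (z k w)) \<longlonglongrightarrow> d w (x w) (l w)"
      using limitin_mdist[OF lim[OF w] section_fibre[OF x w]] .
  qed (use section_dist_measurable[OF x zL] in blast)
qed

end

locale closed_subfield = borel_metric_field M X d L
  for M :: "'w measure" and X :: "'w \<Rightarrow> 'x set" and d L +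
  fixes F :: "'w \<Rightarrow> 'x set"
  assumes closed: "\<forall>w\<in>space M. closedin (Metric_space.mtopology (X w) (d w)) (F w)"
begin

definition support :: "'w set" where
  "support = {w \<in> space M. F w \<noteq> {}}"

lemma fibre_subset: "w \<in> space M \<Longrightarrow> F w \<subseteq> X w"
  using closed closedin_subset Metric_space.topspace_mtopology[OF fibre_metric] by metis

text \<open>(i) => (ii).  On the support the distance is a countable infimum of distances
  between Borel sections; off the support it is infinite.\<close>

lemma setdist_measurable_of_borel_subfield:
  assumes subfield: "borel_subfield M X d L F" and x: "x \<in> L"
  shows "(\<lambda>w. setdist_e (d w) (x w) (F w)) \<in> borel_measurable M"
proof -
  obtain Y where support_sets: "support \<in> sets M" and Y_countable: "countable Y"
    and Y_sections: "Y \<subseteq> borel_sections_on support L"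
    and Y_in: "\<forall>y\<in>Y. \<forall>w\<in>support. y w \<in> F w"
    and Y_dense: "\<forall>w\<in>support. dense_in (d w) ((\<lambda>y. y w) ` Y) (F w)"
    using subfield unfolding borel_subfield_def Let_def support_def by blast
  have "\<forall>y\<in>Y. \<exists>z\<in>L. \<forall>w\<in>support. y w = z w"
    using Y_sections unfolding borel_sections_on_def by blast
  then obtain ext where ext: "\<And>y. y \<in> Y \<Longrightarrow> ext y \<in> L \<and> (\<forall>w\<in>support. y w = ext y w)"
    by metis
  have [measurable]: "(\<lambda>w. d w (x w) (ext y w)) \<in> borel_measurable M" if "y \<in> Y" for y
    using section_dist_measurable[OF x] ext[OF that] by blast
  have "(\<lambda>w. if w \<in> support then INF y\<in>Y. ennreal (d w (x w) (ext y w)) else top)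
          \<in> borel_measurable M"
  proof (rule measurable_If_set)
    show "(\<lambda>w. INF y\<in>Y. ennreal (d w (x w) (ext y w))) \<in> borel_measurable M"
      using Y_countable by measurable
    show "support \<inter> space M \<in> sets M" using support_sets by auto
  qed simp
  moreover have "setdist_e (d w) (x w) (F w) =
      (if w \<in> support then INF y\<in>Y. ennreal (d w (x w) (ext y w)) else top)"
    if w: "w \<in> space M" for w
  proof (cases "w \<in> support")
    case True
    interpret Metric_space "X w" "d w" using fibre_metric[OF w] .
    have "setdist_e (d w) (x w) (F w) = (INF q\<in>(\<lambda>y. y w) ` Y. ennreal (d w (x w) q))"
      using True Y_in Y_dense fibre_subset[OF w] section_fibre[OF x w]
      by (intro setdist_e_dense_subset) auto
    also have "\<dots> = (INF y\<in>Y. ennreal (d w (x w) (ext y w)))"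
      unfolding image_image using ext True by (intro INF_cong) auto
    finally show ?thesis using True by simp
  qed (use w in \<open>simp add: support_def\<close>)
  ultimately show ?thesis by (simp cong: measurable_cong)
qed

text \<open>(iii) => (ii), via setdist_e_via_dense and the fundamental family.\<close>

lemma setdist_measurable_of_fundamental_family:
  assumes fund: "fundamental_family M X d L D"
    and D_measurable: "\<And>v. v \<in> D \<Longrightarrow> (\<lambda>w. setdist_e (d w) (v w) (F w)) \<in> borel_measurable M"
    and x: "x \<in> L"
  shows "(\<lambda>w. setdist_e (d w) (x w) (F w)) \<in> borel_measurable M"
proof -
  have D_countable: "countable D" and DL: "D \<subseteq> L"
    and D_dense: "\<forall>w\<in>space M. dense_in (d w) ((\<lambda>v. v w) ` D) (X w)"
    using fund unfolding fundamental_family_def by auto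
  have [measurable]: "(\<lambda>w. d w (x w) (v w)) \<in> borel_measurable M" if "v \<in> D" for v
    using section_dist_measurable[OF x] DL that by blast
  note D_measurable [measurable]
  have "(\<lambda>w. INF v\<in>D. ennreal (d w (x w) (v w)) + setdist_e (d w) (v w) (F w)) \<in> borel_measurable M"
    using D_countable by measurable
  moreover have "setdist_e (d w) (x w) (F w) =
      (INF v\<in>D. ennreal (d w (x w) (v w)) + setdist_e (d w) (v w) (F w))"
    if w: "w \<in> space M" for w
  proof -
    interpret Metric_space "X w" "d w" using fibre_metric[OF w] .
    have "setdist_e (d w) (x w) (F w) =
        (INF q\<in>(\<lambda>v. v w) ` D. ennreal (d w (x w) q) + setdist_e (d w) q (F w))"
      using D_dense w DL section_fibre fibre_subset[OF w] section_fibre[OF x w]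
      by (intro setdist_e_via_dense) auto
    then show ?thesis unfolding image_image .
  qed
  ultimately show ?thesis by (simp cong: measurable_cong)
qed

end

locale measurable_setdist_subfield = closed_subfield M X d L F
  for M :: "'w measure" and X :: "'w \<Rightarrow> 'x set" and d L F +
  assumes complete: "\<forall>w\<in>space M. Metric_space.mcomplete (X w) (d w)"
    and setdist_measurable: "\<forall>x\<in>L. (\<lambda>w. setdist_e (d w) (x w) (F w)) \<in> borel_measurable M"
begin

lemma setdist_real_measurable:
  assumes "x \<in> L"
  shows "(\<lambda>w. setdist_real (d w) (x w) (F w)) \<in> borel_measurable M"
proof -
  have [measurable]: "(\<lambda>w. setdist_e (d w) (x w) (F w)) \<in> borel_measurable M"
    using setdist_measurable assms by blast
  show ?thesis unfolding setdist_real_def by measurable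
qed

text \<open>The support is measurable: it is the countable union, over a fundamental
  family, of the sets where the distance to F is finite.\<close>

lemma support_measurable: "support \<in> sets M"
proof -
  obtain D where "fundamental_family M X d L D" using fundamental_family_exists by blast
  then have D_countable: "countable D" and DL: "D \<subseteq> L"
    and D_dense: "\<forall>w\<in>space M. dense_in (d w) ((\<lambda>v. v w) ` D) (X w)"
    unfolding fundamental_family_def by auto
  have "support = (\<Union>v\<in>D. {w \<in> space M. setdist_e (d w) (v w) (F w) < top})"
  proof (intro equalityI subsetI)
    fix w assume w: "w \<in> support"
    then obtain p where "p \<in> X w" "w \<in> space M" "F w \<noteq> {}"
      using fibre_subset unfolding support_def by blast
    then obtain q where "q \<in> (\<lambda>v. v w) ` D"
      using D_dense unfolding dense_in_def by (meson zero_less_one)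
    then obtain v where "v \<in> D" by blast
    moreover have "setdist_e (d w) (v w) (F w) < top"
      using setdist_e_finite_iff[of "d w" "v w" "F w"] \<open>F w \<noteq> {}\<close> by blast
    ultimately show "w \<in> (\<Union>v\<in>D. {w \<in> space M. setdist_e (d w) (v w) (F w) < top})"
      using \<open>w \<in> space M\<close> by blast
  next
    fix w assume "w \<in> (\<Union>v\<in>D. {w \<in> space M. setdist_e (d w) (v w) (F w) < top})"
    then obtain v where "w \<in> space M" "setdist_e (d w) (v w) (F w) < top" by blast
    then show "w \<in> support"
      using setdist_e_finite_iff[of "d w" "v w" "F w"] unfolding support_def by blast
  qed
  also have "\<dots> \<in> sets M"
  proof (rule sets.countable_UN''[OF D_countable])
    fix v assume "v \<in> D"
    then have [measurable]: "(\<lambda>w. setdist_e (d w) (v w) (F w)) \<in> borel_measurable M"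
      using setdist_measurable DL by blast
    show "{w \<in> space M. setdist_e (d w) (v w) (F w) < top} \<in> sets M" by measurable
  qed
  finally show ?thesis .
qed

definition improvement :: "real \<Rightarrow> ('w \<Rightarrow> 'x) \<Rightarrow> ('w \<Rightarrow> 'x) \<Rightarrow> bool" where
  "improvement \<delta> z z' \<longleftrightarrow> z' \<in> L
     \<and> (\<forall>w\<in>support. d w (z' w) (z w) < setdist_real (d w) (z w) (F w) + 2 * \<delta>
                    \<and> setdist_real (d w) (z' w) (F w) < \<delta>)
     \<and> (\<forall>w\<in>space M - support. z' w = z w)"

lemma improvementD:
  assumes "improvement \<delta> z z'"
  shows "z' \<in> L"
    and "w \<in> support \<Longrightarrow> d w (z' w) (z w) < setdist_real (d w) (z w) (F w) + 2 * \<delta>"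
    and "w \<in> support \<Longrightarrow> setdist_real (d w) (z' w) (F w) < \<delta>"
    and "w \<in> space M - support \<Longrightarrow> z' w = z w"
  using assms unfolding improvement_def by auto

text \<open>Improvements exist: on the support pick, measurably, the first member of a
  countable dense family of Borel sections satisfying both requirements, and glue.\<close>

lemma improvement_step:
  assumes z: "z \<in> L" and \<delta>: "\<delta> > 0"
  shows "\<exists>z'. improvement \<delta> z z'"
proof -
  obtain D where "fundamental_family M X d L D" using fundamental_family_exists by blast
  then have D_countable: "countable D" and DL: "D \<subseteq> L"
    and D_dense: "\<forall>w\<in>space M. dense_in (d w) ((\<lambda>v. v w) ` D) (X w)"
    unfolding fundamental_family_def by auto
  define e where "e = from_nat_into (insert z D)"
  have range_e: "range e = insert z D"
    unfolding e_def using D_countable by (intro range_from_nat_into) auto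
  have "range e \<subseteq> L" using range_e z DL by simp
  then have eL: "e n \<in> L" for n by blast
  define P where "P n w \<longleftrightarrow> d w (e n w) (z w) < setdist_real (d w) (z w) (F w) + 2 * \<delta>
                            \<and> setdist_real (d w) (e n w) (F w) < \<delta>" for n w
  have P_exists: "\<exists>n. P n w" if w: "w \<in> support" for w
  proof -
    have wM: "w \<in> space M" and ne: "F w \<noteq> {}" using w unfolding support_def by auto
    interpret Metric_space "X w" "d w" using fibre_metric[OF wM] .
    have "(\<lambda>v. v w) ` D \<subseteq> (\<lambda>v. v w) ` range e" using range_e by (intro image_mono) auto
    then have D_in_range: "(\<lambda>v. v w) ` D \<subseteq> range (\<lambda>n. e n w)" by (simp add: image_image)
    have dense: "dense_in (d w) (range (\<lambda>n. e n w)) (X w)"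
      unfolding dense_in_def
    proof (intro ballI allI impI)
      fix p and \<epsilon> :: real assume "p \<in> X w" "\<epsilon> > 0"
      then obtain q where "q \<in> (\<lambda>v. v w) ` D" "d w q p < \<epsilon>"
        using D_dense wM unfolding dense_in_def by blast
      then show "\<exists>q\<in>range (\<lambda>n. e n w). d w q p < \<epsilon>" using D_in_range by blast
    qed
    have "range (\<lambda>n. e n w) \<subseteq> X w" using section_fibre[OF eL wM] by auto
    from dense_point_near_set[OF ne fibre_subset[OF wM] section_fibre[OF z wM] this dense \<delta>]
    obtain n where "d w (e n w) (z w) < setdist_real (d w) (z w) (F w) + 2 * \<delta>"
      and "setdist_real (d w) (e n w) (F w) < \<delta>" by blast
    then show ?thesis unfolding P_def by blast
  qed
  have [measurable]: "support \<in> sets M"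
    by (rule support_measurable)
  have [measurable]: "(\<lambda>w. d w (e n w) (z w)) \<in> borel_measurable M" for n
    using section_dist_measurable[OF eL z] .
  have [measurable]: "(\<lambda>w. setdist_real (d w) (y w) (F w)) \<in> borel_measurable M" if "y \<in> L" for y
    using setdist_real_measurable[OF that] .
  have "(\<lambda>w. LEAST n. P n w) \<in> measurable M (count_space UNIV)"
    by (rule measurable_Least) (use z eL in \<open>unfold P_def, measurable\<close>)
  then have [measurable]: "(\<lambda>w. if w \<in> support then Suc (LEAST n. P n w) else 0)
                             \<in> measurable M (count_space UNIV)"
    by measurable
  define z' where "z' w = case_nat z e (if w \<in> support then Suc (LEAST n. P n w) else 0) w" for w
  have "z' \<in> L"
    unfolding z'_def by (rule section_select) (use z eL in \<open>auto split: nat.split\<close>)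
  moreover have "P (LEAST n. P n w) w \<and> z' w = e (LEAST n. P n w) w" if "w \<in> support" for w
    using LeastI_ex[OF P_exists[OF that]] that unfolding z'_def by simp
  moreover have "z' w = z w" if "w \<notin> support" for w
    using that unfolding z'_def by simp
  ultimately show ?thesis
    unfolding improvement_def P_def by (intro exI[of _ z']) auto
qed

definition approximates :: "real \<Rightarrow> ('w \<Rightarrow> 'x) \<Rightarrow> ('w \<Rightarrow> 'x) \<Rightarrow> bool" where
  "approximates c x y \<longleftrightarrow> y \<in> L
     \<and> (\<forall>w\<in>support. y w \<in> F w \<and> d w (x w) (y w) \<le> setdist_real (d w) (x w) (F w) + c)"

lemma improvement_chain_fibre_limit:
  assumes Z_L: "\<And>k. Z k \<in> L" and chain: "\<And>k. improvement (c / 2 ^ Suc k) (Z k) (Z (Suc k))"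
    and w: "w \<in> support"
  shows "\<exists>l. l \<in> F w
      \<and> limitin (Metric_space.mtopology (X w) (d w)) (\<lambda>k. Z k w) l sequentially
      \<and> d w (Z 0 w) l \<le> setdist_real (d w) (Z 0 w) (F w) + 3 * c"
proof -
  have wM: "w \<in> space M" and ne: "F w \<noteq> {}" using w unfolding support_def by auto
  interpret Metric_space "X w" "d w" using fibre_metric[OF wM] .
  have "\<exists>l\<in>F w. limitin mtopology (\<lambda>k. Z k w) l sequentially
          \<and> d w (Z 0 w) l \<le> setdist_real (d w) (Z 0 w) (F w) + 3 * c"
  proof (rule approximating_sequence_limit)
    show "mcomplete" using complete wM by blast
    show "closedin mtopology (F w)" using closed wM by blast
    show "Z k w \<in> X w" for k using section_fibre[OF Z_L wM] .
    show "setdist_real (d w) (Z (Suc k) w) (F w) < c / 2 ^ Suc k" for k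
      using improvementD(3)[OF chain w] .
    show "d w (Z (Suc k) w) (Z k w) < setdist_real (d w) (Z k w) (F w) + c / 2 ^ k" for k
      using improvementD(2)[OF chain[of k] w] by simp
  qed (rule ne)
  then show ?thesis unfolding Bex_def .
qed

lemma improvement_chain_limit:
  assumes Z0: "Z 0 \<in> L"
    and chain: "\<And>k. improvement (c / 2 ^ Suc k) (Z k) (Z (Suc k))"
  shows "\<exists>y. approximates (3 * c) (Z 0) y"
proof -
  have Z_L: "Z k \<in> L" for k
    using Z0 improvementD(1)[OF chain] by (cases k) auto
  have Z_out: "Z k w = Z 0 w" if "w \<in> space M - support" for k w
    using improvementD(4)[OF chain that] by (induction k) auto
  have "\<forall>w\<in>support. \<exists>l. l \<in> F w
      \<and> limitin (Metric_space.mtopology (X w) (d w)) (\<lambda>k. Z k w) l sequentially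
      \<and> d w (Z 0 w) l \<le> setdist_real (d w) (Z 0 w) (F w) + 3 * c"
    by (intro ballI improvement_chain_fibre_limit[OF Z_L chain])
  from bchoice[OF this] obtain lim where lim: "\<forall>w\<in>support. lim w \<in> F w
      \<and> limitin (Metric_space.mtopology (X w) (d w)) (\<lambda>k. Z k w) (lim w) sequentially
      \<and> d w (Z 0 w) (lim w) \<le> setdist_real (d w) (Z 0 w) (F w) + 3 * c" ..
  define y where "y w = (if w \<in> support then lim w else Z 0 w)" for w
  have "y \<in> L"
  proof (rule section_limit[OF Z_L])
    fix w assume wM: "w \<in> space M"
    show "limitin (Metric_space.mtopology (X w) (d w)) (\<lambda>k. Z k w) (y w) sequentially"
    proof (cases "w \<in> support")
      case False
      interpret Metric_space "X w" "d w" using fibre_metric[OF wM] .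
      have Z_constant: "(\<lambda>k. Z k w) = (\<lambda>k. Z 0 w)"
        by (rule ext) (use Z_out False wM in blast)
      show ?thesis unfolding Z_constant using False section_fibre[OF Z0 wM] by (simp add: y_def)
    next
      case True
      then show ?thesis using lim[rule_format, OF True] by (simp add: y_def)
    qed
  qed
  moreover have "y w \<in> F w \<and> d w (Z 0 w) (y w) \<le> setdist_real (d w) (Z 0 w) (F w) + 3 * c"
    if "w \<in> support" for w
    using lim[rule_format, OF that] that by (simp add: y_def)
  ultimately show ?thesis unfolding approximates_def by (intro exI[of _ y]) blast
qed

text \<open>Every Borel section can be approximated to any precision: iterate improvements.\<close>

lemma approximating_section:
  assumes x: "x \<in> L" and c: "c > 0"
  shows "\<exists>y. approximates c x y"
proof -
  define improve where "improve \<delta> z = (SOME z'. improvement \<delta> z z')" for \<delta> z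
  have improve: "improvement \<delta> z (improve \<delta> z)" if "z \<in> L" "\<delta> > 0" for z \<delta>
    unfolding improve_def using improvement_step[OF that] by (rule someI_ex[of "improvement \<delta> z"])
  define Z where "Z = rec_nat x (\<lambda>k z. improve (c / 3 / 2 ^ Suc k) z)"
  have Z_0: "Z 0 = x" and Z_Suc: "Z (Suc k) = improve (c / 3 / 2 ^ Suc k) (Z k)" for k
    unfolding Z_def by simp_all
  have scale: "c / 3 / 2 ^ Suc k > 0" for k :: nat
    using c by simp
  have Z_L: "Z k \<in> L" for k
  proof (induction k)
    case (Suc k)
    show ?case unfolding Z_Suc by (rule improvementD(1)[OF improve[OF Suc scale]])
  qed (simp add: Z_0 x)
  have chain: "improvement (c / 3 / 2 ^ Suc k) (Z k) (Z (Suc k))" for k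
    unfolding Z_Suc by (rule improve[OF Z_L scale])
  from improvement_chain_limit[OF Z_L chain]
  show ?thesis by (simp add: Z_0)
qed

text \<open>(ii) => (i): the approximating sections of a fundamental family, at scales
  1/(j+1), form a countable family dense in every nonempty fibre of F.\<close>

lemma borel_subfield_of_setdist_measurable: "borel_subfield M X d L F"
proof -
  obtain D where "fundamental_family M X d L D" using fundamental_family_exists by blast
  then have D_countable: "countable D" and DL: "D \<subseteq> L"
    and D_dense: "\<forall>w\<in>space M. dense_in (d w) ((\<lambda>v. v w) ` D) (X w)"
    unfolding fundamental_family_def by auto
  define approx where "approx v j = (SOME y. approximates (inverse (real (Suc j))) v y)" for v j
  have approx: "approximates (inverse (real (Suc j))) v (approx v j)" if "v \<in> L" for v j
    unfolding approx_def
    by (rule someI_ex[of "approximates (inverse (real (Suc j))) v", OF approximating_section[OF that]]) simp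
  define Y where "Y = (\<lambda>(v, j). approx v j) ` (D \<times> UNIV)"
  have approx_L: "approx v j \<in> L"
    and approx_F: "w \<in> support \<Longrightarrow> approx v j w \<in> F w" if "v \<in> D" for v j w
    using approx[of v j] that DL unfolding approximates_def by blast+
  have Y_L: "Y \<subseteq> L" and Y_F: "\<forall>y\<in>Y. \<forall>w\<in>support. y w \<in> F w"
    unfolding Y_def using approx_L approx_F by auto
  have Y_dense: "dense_in (d w) ((\<lambda>y. y w) ` Y) (F w)" if w: "w \<in> support" for w
    unfolding dense_in_def
  proof (intro ballI allI impI)
    fix p and \<epsilon> :: real assume p: "p \<in> F w" and \<epsilon>: "\<epsilon> > 0"
    have wM: "w \<in> space M" using w unfolding support_def by auto
    interpret Metric_space "X w" "d w" using fibre_metric[OF wM] .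
    have "p \<in> X w" "\<epsilon> / 3 > 0" using p fibre_subset[OF wM] \<epsilon> by auto
    then obtain q where "q \<in> (\<lambda>v. v w) ` D" "d w q p < \<epsilon> / 3"
      using D_dense wM unfolding dense_in_def by blast
    then obtain v where v: "v \<in> D" "d w (v w) p < \<epsilon> / 3" by blast
    obtain j where j: "inverse (real (Suc j)) < \<epsilon> / 3"
      using reals_Archimedean[of "\<epsilon> / 3"] \<epsilon> by auto
    have vL: "v \<in> L" using v(1) DL by blast
    have "d w (approx v j w) p \<le> 2 * d w (v w) p + inverse (real (Suc j))"
      using approx[OF vL, of j] w p fibre_subset[OF wM] section_fibre[OF vL wM]
      unfolding approximates_def by (intro almost_nearest_point_close) auto
    then have "d w (approx v j w) p < \<epsilon>" using v(2) j by linarith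
    moreover have "approx v j \<in> Y" unfolding Y_def using v(1) by force
    ultimately show "\<exists>q\<in>(\<lambda>y. y w) ` Y. d w q p < \<epsilon>" by blast
  qed
  show ?thesis
    unfolding borel_subfield_def Let_def support_def[symmetric]
  proof (intro conjI exI[of _ Y])
    show "support \<in> sets M" by (rule support_measurable)
    show "countable Y" unfolding Y_def using D_countable by simp
    show "Y \<subseteq> borel_sections_on support L" using Y_L unfolding borel_sections_on_def by blast
  qed (use Y_F Y_dense in blast)+
qed

end

theorem mainTheorem5:
  fixes M :: "'w measure" and X :: "'w \<Rightarrow> 'x set" and d :: "'w \<Rightarrow> 'x \<Rightarrow> 'x \<Rightarrow> real"
    and L :: "('w \<Rightarrow> 'x) set" and F :: "'w \<Rightarrow> 'x set"
  assumes field: "borel_field M X d L"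
    and complete: "\<forall>w\<in>space M. Metric_space.mcomplete (X w) (d w)"
    and closed: "\<forall>w\<in>space M. closedin (Metric_space.mtopology (X w) (d w)) (F w)"
  shows "(borel_subfield M X d L F \<longleftrightarrow>
            (\<forall>x\<in>L. (\<lambda>w. setdist_e (d w) (x w) (F w)) \<in> borel_measurable M))
       \<and> ((\<forall>x\<in>L. (\<lambda>w. setdist_e (d w) (x w) (F w)) \<in> borel_measurable M) \<longleftrightarrow>
            (\<exists>D. fundamental_family M X d L D \<and>
                 (\<forall>x\<in>D. (\<lambda>w. setdist_e (d w) (x w) (F w)) \<in> borel_measurable M)))"
proof -
  interpret closed_subfield M X d L F
    using field closed by unfold_locales
  let ?all_measurable = "\<forall>x\<in>L. (\<lambda>w. setdist_e (d w) (x w) (F w)) \<in> borel_measurable M"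
  have i_ii: "borel_subfield M X d L F \<Longrightarrow> ?all_measurable"
    using setdist_measurable_of_borel_subfield by blast
  have ii_i: "borel_subfield M X d L F" if ?all_measurable
  proof -
    interpret measurable_setdist_subfield M X d L F
      using complete that by unfold_locales
    show ?thesis by (rule borel_subfield_of_setdist_measurable)
  qed
  have ii_iii: "\<exists>D. fundamental_family M X d L D \<and>
                  (\<forall>x\<in>D. (\<lambda>w. setdist_e (d w) (x w) (F w)) \<in> borel_measurable M)"
    if ?all_measurable
    using fundamental_family_exists that unfolding fundamental_family_def by blast
  have iii_ii: ?all_measurable
    if "fundamental_family M X d L D" "\<forall>x\<in>D. (\<lambda>w. setdist_e (d w) (x w) (F w)) \<in> borel_measurable M"
    for D
    using setdist_measurable_of_fundamental_family that by blast
  show ?thesis using i_ii ii_i ii_iii iii_ii by blast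
qed

end
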